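(* Let $\frac{p}{q}\in\mathbb{Q}\cap[0,1)$. Then there exists an integer $k\ge 0$ such that $R^k\!\left(\frac{p}{q}\right)\in\{0,\tfrac12\}$.
   Context: The map $R:[0,1)\to[0,1)$ is defined by $R(s)=\frac{s}{1-2s}-\left\lfloor\frac{s}{1-2s}\right\rfloor$ for $s\in[0,\tfrac12)$ and $R(s)=1-s$ for $s\in[\tfrac12,1)$; $R^k$ denotes the $k$-fold iterate, $R^0$ the identity. *)

theory Defs
  imports Complex_Main
begin

text \<open>The map R on [0,1): R(s) = frac(s/(1-2s)) for s in [0,1/2), R(s) = 1 - s for s in [1/2,1).
  Values outside [0,1) are irrelevant (the interval is invariant).\<close>
definition R :: "real \<Rightarrow> real" where
  "R s = (if s < 1/2 then s / (1 - 2*s) - of_int \<lfloor>s / (1 - 2*s)\<rfloor> else 1 - s)"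

end

theory Submission
  imports Defs
begin

text \<open>Write the rational as \<open>a/n\<close> with \<open>0 \<le> a < n\<close> and induct on the denominator \<open>n\<close>.
  If \<open>a/n > 1/2\<close>, one step of \<open>R\<close> gives \<open>(n - a)/n < 1/2\<close>. If \<open>0 < a/n < 1/2\<close>, write
  \<open>n = 2a + d\<close>; then \<open>a/n / (1 - 2a/n) = a/d\<close>, so \<open>R(a/n) = (a mod d)/d\<close>, a fraction with the
  strictly smaller denominator \<open>d\<close>.\<close>

definition reaches_zero_or_half :: "real \<Rightarrow> bool" where
  "reaches_zero_or_half x \<longleftrightarrow> (\<exists>k. (R ^^ k) x \<in> {0, 1/2})"

lemma reaches_zero_or_half_if_R: "reaches_zero_or_half (R x) \<Longrightarrow> reaches_zero_or_half x"
  unfolding reaches_zero_or_half_def by (metis comp_apply funpow_Suc_right)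

lemma R_ge_half: "1/2 \<le> s \<Longrightarrow> R s = 1 - s"
  by (simp add: R_def)

lemma R_lt_half: "s < 1/2 \<Longrightarrow> R s = frac (s / (1 - 2*s))"
  by (simp add: R_def frac_def)

lemma frac_of_nat_divide: "frac (real a / real d) = real (a mod d) / real d"
proof (cases "d = 0")
  case False
  have "real a = real d * real (a div d) + real (a mod d)"
    by (metis div_mult_mod_eq of_nat_add of_nat_mult mult.commute)
  then have "real a / real d - real (a div d) = real (a mod d) / real d"
    using False by (simp add: field_simps)
  then show ?thesis
    by (simp add: frac_def floor_divide_of_nat_eq)
qed (simp add: frac_def)

lemma R_of_nat_divide_lt_half:
  assumes "d > 0"
  shows "R (real a / real (2*a + d)) = real (a mod d) / real d"
proof -
  have lt: "real a / real (2*a + d) < 1/2"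
    using assms by (simp add: field_simps)
  have "1 - 2 * (real a / real (2*a + d)) = real d / real (2*a + d)"
    using assms by (simp add: field_simps)
  then have "real a / real (2*a + d) / (1 - 2 * (real a / real (2*a + d))) = real a / real d"
    using assms by simp
  then show ?thesis
    by (simp only: R_lt_half[OF lt] frac_of_nat_divide)
qed

lemma R_of_nat_divide_gt_half:
  assumes "n < 2*a" "a \<le> n"
  shows "R (real a / real n) = real (n - a) / real n"
proof -
  have "1/2 \<le> real a / real n"
    using assms by (simp add: field_simps)
  then show ?thesis
    using assms by (simp add: R_ge_half of_nat_diff field_simps)
qed

lemma reaches_zero_or_half_of_nat_divide:
  "a < n \<Longrightarrow> reaches_zero_or_half (real a / real n)"
proof (induction n arbitrary: a rule: less_induct)
  case (less n)
  have below_half: "reaches_zero_or_half (real b / real n)" if "2*b < n" for b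
  proof (cases "b = 0")
    case True
    then show ?thesis
      unfolding reaches_zero_or_half_def by (intro exI[of _ 0]) simp
  next
    case False
    define d where "d = n - 2*b"
    have "d > 0" "d < n" "n = 2*b + d"
      using that False by (auto simp: d_def)
    moreover have "reaches_zero_or_half (real (b mod d) / real d)"
      using less.IH \<open>d < n\<close> \<open>d > 0\<close> by simp
    ultimately show ?thesis
      by (metis R_of_nat_divide_lt_half reaches_zero_or_half_if_R)
  qed
  consider "2*a < n" | "2*a = n" | "n < 2*a"
    by linarith
  then show ?case
  proof cases
    case 1
    then show ?thesis by (rule below_half)
  next
    case 2
    then have "real a / real n = 1/2"
      using less.prems by (simp add: field_simps)
    then show ?thesis
      unfolding reaches_zero_or_half_def by (intro exI[of _ 0]) simp
  next
    case 3
    then have "reaches_zero_or_half (real (n - a) / real n)"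
      using less.prems by (intro below_half) simp
    then show ?thesis
      using 3 less.prems by (metis R_of_nat_divide_gt_half less_imp_le reaches_zero_or_half_if_R)
  qed
qed

theorem lemma3p1:
  fixes x :: real
  assumes "x \<in> \<rat>" and "0 \<le> x" and "x < 1"
  shows "\<exists>k::nat. (R ^^ k) x \<in> {0, 1/2}"
proof -
  obtain i :: int and n :: nat where "n \<noteq> 0" and x: "x = real_of_int i / real n"
    using assms(1) by (auto simp: Rats_eq_int_div_nat)
  then have "0 \<le> i" "i < int n"
    using assms(2,3) by (auto simp: zero_le_divide_iff divide_less_eq)
  then have "x = real (nat i) / real n" "nat i < n"
    using x by auto
  then show ?thesis
    using reaches_zero_or_half_of_nat_divide reaches_zero_or_half_def by metis
qed

end
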